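(* Let $G=H\times K$ where $H$ and $K$ are finitely generated groups. Then $\alpha_G\preccurlyeq\alpha_H\cdot\alpha_K$. If, in addition, $H$ and $K$ are characteristic in $G$, then $\alpha_G\sim\alpha_H\cdot\alpha_K$.
   Context: For a finitely generated group $G$ with finite generating set $\Sigma$, the automorphic growth function sends $n$ to the number of $\operatorname{Aut}(G)$-orbits of $G$ containing an element of word length at most $n$; $\alpha_G$ denotes its $\sim$-class (independent of $\Sigma$). For non-decreasing non-zero $f,g\colon\mathbb{N}\to\mathbb{N}$, $f\preccurlyeq g$ means there is $\lambda\in\mathbb{N}\setminus\{0\}$ with $f(n)\le\lambda g(\lambda n+\lambda)+\lambda$ for all $n$, and $f\sim g$ means both directions hold; products of classes are taken pointwise on representatives (well defined). *)

theory Defs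
  imports "HOL-Algebra.Algebra"
begin

definition fin_gen_set :: "('a, 'm) monoid_scheme \<Rightarrow> 'a set \<Rightarrow> bool" where
  "fin_gen_set G S \<longleftrightarrow> finite S \<and> S \<subseteq> carrier G \<and> generate G S = carrier G"

definition words_eval :: "('a, 'm) monoid_scheme \<Rightarrow> 'a set \<Rightarrow> nat \<Rightarrow> 'a set" where
  "words_eval G S n = {foldr (\<otimes>\<^bsub>G\<^esub>) xs \<one>\<^bsub>G\<^esub> | xs.
      length xs = n \<and> set xs \<subseteq> S \<union> m_inv G ` S}"

definition word_length :: "('a, 'm) monoid_scheme \<Rightarrow> 'a set \<Rightarrow> 'a \<Rightarrow> nat" where
  "word_length G S g = (LEAST n. g \<in> words_eval G S n)"

definition aut_orbit :: "('a, 'm) monoid_scheme \<Rightarrow> 'a \<Rightarrow> 'a set" where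
  "aut_orbit G g = {\<phi> g | \<phi>. \<phi> \<in> iso G G}"

definition aut_growth :: "('a, 'm) monoid_scheme \<Rightarrow> 'a set \<Rightarrow> nat \<Rightarrow> nat" where
  "aut_growth G S n = card {aut_orbit G g | g. g \<in> carrier G \<and> word_length G S g \<le> n}"

definition growth_le :: "(nat \<Rightarrow> nat) \<Rightarrow> (nat \<Rightarrow> nat) \<Rightarrow> bool" (infix "\<preccurlyeq>\<^sub>g" 50) where
  "f \<preccurlyeq>\<^sub>g g \<longleftrightarrow> (\<exists>c::nat. c \<noteq> 0 \<and> (\<forall>n. f n \<le> c * g (c * n + c) + c))"

definition growth_equiv :: "(nat \<Rightarrow> nat) \<Rightarrow> (nat \<Rightarrow> nat) \<Rightarrow> bool" (infix "\<sim>\<^sub>g" 50) where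
  "f \<sim>\<^sub>g g \<longleftrightarrow> f \<preccurlyeq>\<^sub>g g \<and> g \<preccurlyeq>\<^sub>g f"

definition characteristic :: "'a set \<Rightarrow> ('a, 'm) monoid_scheme \<Rightarrow> bool" where
  "characteristic S G \<longleftrightarrow> subgroup S G \<and> (\<forall>\<phi>\<in>iso G G. \<phi> ` S \<subseteq> S)"

end

theory Submission
  imports Defs
begin

text \<open>A homomorphism between finitely generated groups increases word length by at most a
  constant factor, so the projections of \<open>G = H \<times> K\<close> onto its factors and the inclusions of
  the factors map balls of radius \<open>n\<close> into balls of radius \<open>c n\<close>. Pairs of automorphisms of
  \<open>H\<close> and \<open>K\<close> act on \<open>G\<close>, hence the pair of orbits of \<open>h\<close> and \<open>k\<close> determines the orbit of
  \<open>(h, k)\<close>; counting orbits in balls gives \<open>\<alpha>\<^sub>G \<preccurlyeq> \<alpha>\<^sub>H \<alpha>\<^sub>K\<close>. If both factors are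
  characteristic, every automorphism of \<open>G\<close> is such a pair, so conversely the orbit of
  \<open>(h, k)\<close> determines the pair of orbits, which gives the reverse bound.\<close>

lemma (in monoid) multlist_append:
  "set xs \<subseteq> carrier G \<Longrightarrow> set ys \<subseteq> carrier G \<Longrightarrow>
    foldr (\<otimes>) (xs @ ys) \<one> = foldr (\<otimes>) xs \<one> \<otimes> foldr (\<otimes>) ys \<one>"
  by (induct xs) (simp_all add: m_assoc)

lemma one_mem_words_eval_0: "\<one>\<^bsub>G\<^esub> \<in> words_eval G S 0"
  unfolding words_eval_def by auto

context group
begin

lemma letter_mem_words_eval_1:
  "S \<subseteq> carrier G \<Longrightarrow> x \<in> S \<union> m_inv G ` S \<Longrightarrow> x \<in> words_eval G S 1"
  unfolding words_eval_def
  by (intro CollectI exI[of _ "[x]"]) auto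

lemma words_eval_mult:
  assumes S: "S \<subseteq> carrier G" and "x \<in> words_eval G S m" "y \<in> words_eval G S n"
  shows "x \<otimes> y \<in> words_eval G S (m + n)"
proof -
  obtain xs where xs: "x = foldr (\<otimes>) xs \<one>" "length xs = m" "set xs \<subseteq> S \<union> m_inv G ` S"
    using assms(2) unfolding words_eval_def by blast
  obtain ys where ys: "y = foldr (\<otimes>) ys \<one>" "length ys = n" "set ys \<subseteq> S \<union> m_inv G ` S"
    using assms(3) unfolding words_eval_def by blast
  have "set xs \<subseteq> carrier G" "set ys \<subseteq> carrier G"
    using xs(3) ys(3) S by auto
  then have "x \<otimes> y = foldr (\<otimes>) (xs @ ys) \<one>"
    using xs(1) ys(1) by (simp only: multlist_append)
  then show ?thesis
    unfolding words_eval_def using xs ys by (intro CollectI exI[of _ "xs @ ys"]) auto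
qed

lemma generate_subset_words_eval:
  assumes "S \<subseteq> carrier G" "g \<in> generate G S"
  shows "\<exists>n. g \<in> words_eval G S n"
  using assms(2)
proof (induction rule: generate.induct)
  case one
  then show ?case using one_mem_words_eval_0 by blast
next
  case (incl h)
  then show ?case using letter_mem_words_eval_1[OF assms(1)] by blast
next
  case (inv h)
  then show ?case using letter_mem_words_eval_1[OF assms(1)] by blast
next
  case (eng h1 h2)
  then show ?case using words_eval_mult[OF assms(1)] by blast
qed

lemma mem_words_eval_word_length:
  assumes "fin_gen_set G S" "g \<in> carrier G"
  shows "g \<in> words_eval G S (word_length G S g)"
  using generate_subset_words_eval[of S g] assms unfolding fin_gen_set_def word_length_def
  by (auto intro: LeastI_ex)

end

lemma word_length_le: "g \<in> words_eval G S n \<Longrightarrow> word_length G S g \<le> n"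
  unfolding word_length_def by (rule Least_le)

lemma word_length_one: "word_length G S \<one>\<^bsub>G\<^esub> = 0"
  using word_length_le[OF one_mem_words_eval_0] by simp

lemma (in group) word_length_mult:
  assumes S: "fin_gen_set G S" and "x \<in> carrier G" "y \<in> carrier G"
  shows "word_length G S (x \<otimes> y) \<le> word_length G S x + word_length G S y"
proof (rule word_length_le, rule words_eval_mult)
  show "S \<subseteq> carrier G" using S unfolding fin_gen_set_def by blast
qed (use assms mem_words_eval_word_length in auto)

lemma (in group) hom_word_length_le_linear:
  assumes G': "group G'" and S: "fin_gen_set G S" and S': "fin_gen_set G' S'"
    and f: "f \<in> hom G G'"
  obtains c where "\<And>g. g \<in> carrier G \<Longrightarrow> word_length G' S' (f g) \<le> c * word_length G S g"
proof -
  interpret G': group G' by (rule G')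
  define L where "L = S \<union> m_inv G ` S"
  define c where "c = Max (insert 0 ((\<lambda>x. word_length G' S' (f x)) ` L))"
  have L: "L \<subseteq> carrier G" "finite L"
    using S unfolding L_def fin_gen_set_def by auto
  have letter: "word_length G' S' (f x) \<le> c" if "x \<in> L" for x
    unfolding c_def using L(2) that by (intro Max_ge) auto
  have word: "word_length G' S' (f (foldr (\<otimes>) xs \<one>)) \<le> c * length xs" if "set xs \<subseteq> L" for xs
    using that
  proof (induction xs)
    case Nil
    then show ?case using hom_one[OF f is_group G'] word_length_one by simp
  next
    case (Cons x xs)
    have x: "x \<in> carrier G" and xs: "foldr (\<otimes>) xs \<one> \<in> carrier G"
      using Cons.prems L(1) by auto
    have "word_length G' S' (f (foldr (\<otimes>) (x # xs) \<one>))
        \<le> word_length G' S' (f x) + word_length G' S' (f (foldr (\<otimes>) xs \<one>))"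
      using G'.word_length_mult[OF S'] hom_mult[OF f x xs] hom_in_carrier[OF f] x xs by simp
    also have "\<dots> \<le> c + c * length xs"
      using Cons letter by (intro add_mono) auto
    finally show ?case by simp
  qed
  show thesis
  proof
    fix g assume "g \<in> carrier G"
    then show "word_length G' S' (f g) \<le> c * word_length G S g"
      using mem_words_eval_word_length[OF S] word unfolding words_eval_def L_def by fastforce
  qed
qed

definition word_ball :: "('a, 'm) monoid_scheme \<Rightarrow> 'a set \<Rightarrow> nat \<Rightarrow> 'a set" where
  "word_ball G S n = {g \<in> carrier G. word_length G S g \<le> n}"

lemma aut_growth_eq_card_word_ball: "aut_growth G S n = card (aut_orbit G ` word_ball G S n)"
  unfolding aut_growth_def word_ball_def by (rule arg_cong[where f = card]) blast

lemma word_ball_mono: "n \<le> m \<Longrightarrow> word_ball G S n \<subseteq> word_ball G S m"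
  unfolding word_ball_def by auto

lemma (in group) finite_word_ball:
  assumes "fin_gen_set G S" shows "finite (word_ball G S n)"
proof (rule finite_subset)
  show "word_ball G S n \<subseteq> (\<Union>m\<le>n. words_eval G S m)"
    unfolding word_ball_def using mem_words_eval_word_length[OF assms] by blast
  have "finite (words_eval G S m)" for m
  proof -
    have "words_eval G S m = (\<lambda>xs. foldr (\<otimes>) xs \<one>) ` {xs. set xs \<subseteq> S \<union> m_inv G ` S \<and> length xs = m}"
      unfolding words_eval_def by auto
    then show ?thesis
      using finite_lists_length_eq[of "S \<union> m_inv G ` S" m] assms unfolding fin_gen_set_def by simp
  qed
  then show "finite (\<Union>m\<le>n. words_eval G S m)" by blast
qed

lemma (in group) mono_aut_growth: "fin_gen_set G S \<Longrightarrow> mono (aut_growth G S)"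
  unfolding aut_growth_eq_card_word_ball
  by (intro monoI card_mono finite_imageI finite_word_ball image_mono word_ball_mono)

lemma mem_aut_orbit_self: "g \<in> aut_orbit G g"
  unfolding aut_orbit_def using iso_set_refl by force

lemma aut_orbit_eqD: "aut_orbit G g = aut_orbit G g' \<Longrightarrow> \<exists>\<phi>\<in>iso G G. g' = \<phi> g"
  using mem_aut_orbit_self[of g' G] unfolding aut_orbit_def by auto

lemma (in group) aut_orbit_iso_apply:
  assumes \<phi>: "\<phi> \<in> iso G G" and g: "g \<in> carrier G"
  shows "aut_orbit G (\<phi> g) = aut_orbit G g"
proof
  show "aut_orbit G (\<phi> g) \<subseteq> aut_orbit G g"
    unfolding aut_orbit_def using iso_set_trans[OF \<phi>] by (force simp: comp_def)
  show "aut_orbit G g \<subseteq> aut_orbit G (\<phi> g)"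
  proof
    fix x assume "x \<in> aut_orbit G g"
    then obtain \<psi> where \<psi>: "\<psi> \<in> iso G G" "x = \<psi> g" unfolding aut_orbit_def by blast
    let ?\<phi>' = "inv_into (carrier G) \<phi>"
    have "x = (\<psi> \<circ> ?\<phi>') (\<phi> g)"
      using \<phi> g \<psi>(2) by (simp add: iso_def bij_betw_def)
    moreover have "\<psi> \<circ> ?\<phi>' \<in> iso G G"
      using iso_set_trans[OF iso_set_sym[OF \<phi>] \<psi>(1)] .
    ultimately show "x \<in> aut_orbit G (\<phi> g)" unfolding aut_orbit_def by blast
  qed
qed

lemma card_image_le_card_image:
  assumes "finite D" "\<And>x y. x \<in> D \<Longrightarrow> y \<in> D \<Longrightarrow> p x = p y \<Longrightarrow> q x = q y"
  shows "card (q ` D) \<le> card (p ` D)"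
proof (rule surj_card_le)
  show "finite (p ` D)" using assms(1) by blast
  show "q ` D \<subseteq> (\<lambda>z. q (inv_into D p z)) ` p ` D"
  proof
    fix w assume "w \<in> q ` D"
    then obtain x where x: "x \<in> D" "w = q x" by blast
    have "inv_into D p (p x) \<in> D" "p (inv_into D p (p x)) = p x"
      using x(1) by (auto intro: inv_into_into f_inv_into_f)
    then have "q (inv_into D p (p x)) = w"
      using assms(2) x by blast
    then show "w \<in> (\<lambda>z. q (inv_into D p z)) ` p ` D" using x(1) by blast
  qed
qed

lemma aut_orbit_DirProd_eqI:
  assumes H: "group H" and K: "group K" and "h \<in> carrier H" "k \<in> carrier K"
    and "aut_orbit H h = aut_orbit H h'" "aut_orbit K k = aut_orbit K k'"
  shows "aut_orbit (H \<times>\<times> K) (h, k) = aut_orbit (H \<times>\<times> K) (h', k')"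
proof -
  obtain \<psi> \<chi> where \<psi>: "\<psi> \<in> iso H H" "h' = \<psi> h" and \<chi>: "\<chi> \<in> iso K K" "k' = \<chi> k"
    using assms(5,6) by (blast dest: aut_orbit_eqD)
  have "(\<lambda>(x, y). (\<psi> x, \<chi> y)) \<in> iso (H \<times>\<times> K) (H \<times>\<times> K)"
    using group.DirProd_iso_set_trans[OF H \<psi>(1) \<chi>(1)] .
  from group.aut_orbit_iso_apply[OF DirProd_group[OF H K] this, of "(h, k)"]
  show ?thesis using assms(3,4) \<psi>(2) \<chi>(2) by simp
qed

lemma (in group) characteristic_image_eq:
  assumes A: "characteristic A G" and \<phi>: "\<phi> \<in> iso G G"
  shows "\<phi> ` A = A"
proof
  show "\<phi> ` A \<subseteq> A" using A \<phi> unfolding characteristic_def by blast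
  show "A \<subseteq> \<phi> ` A"
  proof
    fix a assume a: "a \<in> A"
    let ?\<phi>' = "inv_into (carrier G) \<phi>"
    have "?\<phi>' a \<in> A"
      using A iso_set_sym[OF \<phi>] a unfolding characteristic_def by blast
    moreover have "a \<in> carrier G" using A a subgroup.subset unfolding characteristic_def by blast
    then have "a = \<phi> (?\<phi>' a)"
      using \<phi> by (simp add: iso_def bij_betw_def f_inv_into_f)
    ultimately show "a \<in> \<phi> ` A" by blast
  qed
qed

lemma iso_through_invariant_subset:
  assumes \<phi>: "\<phi> \<in> iso G G" "\<phi> ` A = A" and "e \<in> hom H G" "\<pi> \<in> hom G H"
    and e: "bij_betw e (carrier H) A" and \<pi>: "bij_betw \<pi> A (carrier H)"
  shows "\<pi> \<circ> \<phi> \<circ> e \<in> iso H H"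
proof -
  have "A \<subseteq> carrier G" using e hom_carrier[OF assms(3)] by (simp add: bij_betw_def)
  then have "bij_betw \<phi> A A"
    using \<phi> by (auto simp: iso_def bij_betw_def intro: inj_on_subset)
  then have "bij_betw (\<pi> \<circ> \<phi> \<circ> e) (carrier H) (carrier H)"
    using e \<pi> by (blast intro: bij_betw_trans)
  moreover have "\<pi> \<circ> \<phi> \<circ> e \<in> hom H H"
    using \<phi>(1) assms(3,4) by (auto simp: iso_def intro: hom_compose)
  ultimately show ?thesis unfolding iso_def by blast
qed

lemma DirProd_aut_split:
  assumes H: "group H" and K: "group K" and \<phi>: "\<phi> \<in> iso (H \<times>\<times> K) (H \<times>\<times> K)"
    and invH: "\<phi> ` (carrier H \<times> {\<one>\<^bsub>K\<^esub>}) = carrier H \<times> {\<one>\<^bsub>K\<^esub>}"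
    and invK: "\<phi> ` ({\<one>\<^bsub>H\<^esub>} \<times> carrier K) = {\<one>\<^bsub>H\<^esub>} \<times> carrier K"
  obtains \<psi> \<chi> where "\<psi> \<in> iso H H" "\<chi> \<in> iso K K"
    "\<And>x y. x \<in> carrier H \<Longrightarrow> y \<in> carrier K \<Longrightarrow> \<phi> (x, y) = (\<psi> x, \<chi> y)"
proof
  interpret H: group H by (rule H)
  interpret K: group K by (rule K)
  define \<psi> where "\<psi> = fst \<circ> \<phi> \<circ> (\<lambda>x. (x, \<one>\<^bsub>K\<^esub>))"
  define \<chi> where "\<chi> = snd \<circ> \<phi> \<circ> (\<lambda>y. (\<one>\<^bsub>H\<^esub>, y))"
  show "\<psi> \<in> iso H H" unfolding \<psi>_def
    by (rule iso_through_invariant_subset[OF \<phi> invH])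
      (auto simp: hom_def bij_betw_def inj_on_def)
  show "\<chi> \<in> iso K K" unfolding \<chi>_def
    by (rule iso_through_invariant_subset[OF \<phi> invK])
      (auto simp: hom_def bij_betw_def inj_on_def)
  fix x y assume x: "x \<in> carrier H" and y: "y \<in> carrier K"
  have "\<phi> (x, \<one>\<^bsub>K\<^esub>) \<in> carrier H \<times> {\<one>\<^bsub>K\<^esub>}" using invH x by blast
  then have "\<phi> (x, \<one>\<^bsub>K\<^esub>) = (\<psi> x, \<one>\<^bsub>K\<^esub>)" "\<psi> x \<in> carrier H"
    unfolding \<psi>_def by (auto simp: prod_eq_iff)
  moreover have "\<phi> (\<one>\<^bsub>H\<^esub>, y) \<in> {\<one>\<^bsub>H\<^esub>} \<times> carrier K" using invK y by blast
  then have "\<phi> (\<one>\<^bsub>H\<^esub>, y) = (\<one>\<^bsub>H\<^esub>, \<chi> y)" "\<chi> y \<in> carrier K"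
    unfolding \<chi>_def by (auto simp: prod_eq_iff)
  moreover have "\<phi> (x, y) = \<phi> (x, \<one>\<^bsub>K\<^esub>) \<otimes>\<^bsub>H \<times>\<times> K\<^esub> \<phi> (\<one>\<^bsub>H\<^esub>, y)"
    using hom_mult[of \<phi> "H \<times>\<times> K" "H \<times>\<times> K" "(x, \<one>\<^bsub>K\<^esub>)" "(\<one>\<^bsub>H\<^esub>, y)"] \<phi> x y
    by (simp add: iso_def)
  ultimately show "\<phi> (x, y) = (\<psi> x, \<chi> y)" by simp
qed

lemma aut_orbit_DirProd_eqD:
  assumes H: "group H" and K: "group K"
    and charH: "characteristic (carrier H \<times> {\<one>\<^bsub>K\<^esub>}) (H \<times>\<times> K)"
    and charK: "characteristic ({\<one>\<^bsub>H\<^esub>} \<times> carrier K) (H \<times>\<times> K)"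
    and "h \<in> carrier H" "k \<in> carrier K"
    and "aut_orbit (H \<times>\<times> K) (h, k) = aut_orbit (H \<times>\<times> K) (h', k')"
  shows "aut_orbit H h = aut_orbit H h' \<and> aut_orbit K k = aut_orbit K k'"
proof -
  interpret G: group "H \<times>\<times> K" by (rule DirProd_group[OF H K])
  obtain \<phi> where \<phi>: "\<phi> \<in> iso (H \<times>\<times> K) (H \<times>\<times> K)" "(h', k') = \<phi> (h, k)"
    using aut_orbit_eqD[OF assms(7)] by blast
  obtain \<psi> \<chi> where "\<psi> \<in> iso H H" "\<chi> \<in> iso K K" "\<phi> (h, k) = (\<psi> h, \<chi> k)"
    using DirProd_aut_split[OF H K \<phi>(1)] G.characteristic_image_eq[OF _ \<phi>(1)] charH charK assms(5,6)
    by metis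
  then show ?thesis
    using group.aut_orbit_iso_apply[OF H] group.aut_orbit_iso_apply[OF K] \<phi>(2) assms(5,6) by simp
qed

lemma growth_le_dilationI:
  assumes "mono g" "\<And>n. f n \<le> g (c * n)"
  shows "f \<preccurlyeq>\<^sub>g g"
  unfolding growth_le_def
proof (intro exI[of _ "c + 1"] conjI allI)
  fix n
  have "f n \<le> g (c * n)" by (rule assms(2))
  also have "\<dots> \<le> g ((c + 1) * n + (c + 1))" by (rule monoD[OF assms(1)]) simp
  also have "\<dots> \<le> (c + 1) * g ((c + 1) * n + (c + 1)) + (c + 1)" by simp
  finally show "f n \<le> (c + 1) * g ((c + 1) * n + (c + 1)) + (c + 1)" .
qed simp

context
  fixes H :: "('a, 'c) monoid_scheme" and K :: "('b, 'd) monoid_scheme"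
    and SH :: "'a set" and SK :: "'b set" and SG :: "('a \<times> 'b) set"
  assumes H: "group H" and K: "group K"
    and SH: "fin_gen_set H SH" and SK: "fin_gen_set K SK" and SG: "fin_gen_set (H \<times>\<times> K) SG"
begin

interpretation H: group H by (rule H)
interpretation K: group K by (rule K)
interpretation G: group "H \<times>\<times> K" by (rule DirProd_group[OF H K])

lemma word_ball_DirProd_subset:
  obtains c where "\<And>n. word_ball (H \<times>\<times> K) SG n \<subseteq> word_ball H SH (c * n) \<times> word_ball K SK (c * n)"
proof -
  have "fst \<in> hom (H \<times>\<times> K) H" "snd \<in> hom (H \<times>\<times> K) K" by (auto simp: hom_def)
  then obtain cH cK where
    cH: "\<And>g. g \<in> carrier (H \<times>\<times> K) \<Longrightarrow> word_length H SH (fst g) \<le> cH * word_length (H \<times>\<times> K) SG g" and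
    cK: "\<And>g. g \<in> carrier (H \<times>\<times> K) \<Longrightarrow> word_length K SK (snd g) \<le> cK * word_length (H \<times>\<times> K) SG g"
    using G.hom_word_length_le_linear[OF H SG SH] G.hom_word_length_le_linear[OF K SG SK] by metis
  have "word_ball (H \<times>\<times> K) SG n \<subseteq> word_ball H SH ((cH + cK) * n) \<times> word_ball K SK ((cH + cK) * n)" for n
  proof
    fix g assume "g \<in> word_ball (H \<times>\<times> K) SG n"
    then have g: "g \<in> carrier (H \<times>\<times> K)" "word_length (H \<times>\<times> K) SG g \<le> n"
      unfolding word_ball_def by auto
    have "cH * word_length (H \<times>\<times> K) SG g \<le> (cH + cK) * n"
      "cK * word_length (H \<times>\<times> K) SG g \<le> (cH + cK) * n"
      using g(2) by (simp_all add: add_mult_distrib mult_le_mono trans_le_add1 trans_le_add2)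
    then show "g \<in> word_ball H SH ((cH + cK) * n) \<times> word_ball K SK ((cH + cK) * n)"
      using cH[OF g(1)] cK[OF g(1)] g(1) unfolding word_ball_def by (auto simp: mem_Times_iff)
  qed
  then show thesis by (rule that)
qed

lemma word_ball_DirProd_supset:
  obtains c where "\<And>n. word_ball H SH n \<times> word_ball K SK n \<subseteq> word_ball (H \<times>\<times> K) SG (c * n)"
proof -
  have "(\<lambda>h. (h, \<one>\<^bsub>K\<^esub>)) \<in> hom H (H \<times>\<times> K)" "(\<lambda>k. (\<one>\<^bsub>H\<^esub>, k)) \<in> hom K (H \<times>\<times> K)"
    by (auto simp: hom_def)
  then obtain cH cK where
    cH: "\<And>h. h \<in> carrier H \<Longrightarrow> word_length (H \<times>\<times> K) SG (h, \<one>\<^bsub>K\<^esub>) \<le> cH * word_length H SH h" and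
    cK: "\<And>k. k \<in> carrier K \<Longrightarrow> word_length (H \<times>\<times> K) SG (\<one>\<^bsub>H\<^esub>, k) \<le> cK * word_length K SK k"
    using group.hom_word_length_le_linear[OF H G.is_group SH SG]
      group.hom_word_length_le_linear[OF K G.is_group SK SG] by metis
  have "word_ball H SH n \<times> word_ball K SK n \<subseteq> word_ball (H \<times>\<times> K) SG ((cH + cK) * n)" for n
  proof (clarify)
    fix h k assume "h \<in> word_ball H SH n" "k \<in> word_ball K SK n"
    then have h: "h \<in> carrier H" "word_length H SH h \<le> n"
      and k: "k \<in> carrier K" "word_length K SK k \<le> n"
      unfolding word_ball_def by auto
    have "(h, k) = (h, \<one>\<^bsub>K\<^esub>) \<otimes>\<^bsub>H \<times>\<times> K\<^esub> (\<one>\<^bsub>H\<^esub>, k)"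
      using h(1) k(1) by simp
    then have "word_length (H \<times>\<times> K) SG (h, k)
        \<le> word_length (H \<times>\<times> K) SG (h, \<one>\<^bsub>K\<^esub>) + word_length (H \<times>\<times> K) SG (\<one>\<^bsub>H\<^esub>, k)"
      using G.word_length_mult[OF SG, of "(h, \<one>\<^bsub>K\<^esub>)" "(\<one>\<^bsub>H\<^esub>, k)"] h(1) k(1) by simp
    also have "\<dots> \<le> cH * n + cK * n"
      using cH[OF h(1)] cK[OF k(1)] h(2) k(2) by (meson add_mono le_trans mult_le_mono2)
    finally show "(h, k) \<in> word_ball (H \<times>\<times> K) SG ((cH + cK) * n)"
      using h(1) k(1) unfolding word_ball_def by (simp add: add_mult_distrib)
  qed
  then show thesis by (rule that)
qed

lemma mono_aut_growth_product: "mono (\<lambda>n. aut_growth H SH n * aut_growth K SK n)"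
  using group.mono_aut_growth[OF H SH] group.mono_aut_growth[OF K SK]
  by (auto intro!: monoI mult_le_mono dest: monoD)

lemma aut_growth_DirProd_le:
  "aut_growth (H \<times>\<times> K) SG \<preccurlyeq>\<^sub>g (\<lambda>n. aut_growth H SH n * aut_growth K SK n)"
proof -
  obtain c where c: "\<And>n. word_ball (H \<times>\<times> K) SG n \<subseteq> word_ball H SH (c * n) \<times> word_ball K SK (c * n)"
    using word_ball_DirProd_subset by blast
  let ?p = "map_prod (aut_orbit H) (aut_orbit K)"
  have "aut_growth (H \<times>\<times> K) SG n \<le> aut_growth H SH (c * n) * aut_growth K SK (c * n)" for n
  proof -
    let ?BH = "word_ball H SH (c * n)" and ?BK = "word_ball K SK (c * n)"
    have "aut_growth (H \<times>\<times> K) SG n = card (aut_orbit (H \<times>\<times> K) ` word_ball (H \<times>\<times> K) SG n)"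
      by (rule aut_growth_eq_card_word_ball)
    also have "\<dots> \<le> card (?p ` word_ball (H \<times>\<times> K) SG n)"
    proof (rule card_image_le_card_image[OF G.finite_word_ball[OF SG]])
      fix x y assume "x \<in> word_ball (H \<times>\<times> K) SG n" "?p x = ?p y"
      then show "aut_orbit (H \<times>\<times> K) x = aut_orbit (H \<times>\<times> K) y"
        using aut_orbit_DirProd_eqI[OF H K] unfolding word_ball_def
        by (cases x, cases y) auto
    qed
    also have "\<dots> \<le> card (?p ` (?BH \<times> ?BK))"
      using c group.finite_word_ball[OF H SH] group.finite_word_ball[OF K SK]
      by (intro card_mono finite_imageI image_mono) auto
    also have "\<dots> = card (aut_orbit H ` ?BH \<times> aut_orbit K ` ?BK)"
      by (simp add: map_prod_surj_on)
    also have "\<dots> = aut_growth H SH (c * n) * aut_growth K SK (c * n)"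
      by (simp add: aut_growth_eq_card_word_ball card_cartesian_product)
    finally show ?thesis .
  qed
  then show ?thesis by (rule growth_le_dilationI[OF mono_aut_growth_product])
qed

lemma aut_growth_DirProd_ge:
  assumes charH: "characteristic (carrier H \<times> {\<one>\<^bsub>K\<^esub>}) (H \<times>\<times> K)"
    and charK: "characteristic ({\<one>\<^bsub>H\<^esub>} \<times> carrier K) (H \<times>\<times> K)"
  shows "(\<lambda>n. aut_growth H SH n * aut_growth K SK n) \<preccurlyeq>\<^sub>g aut_growth (H \<times>\<times> K) SG"
proof -
  obtain c where c: "\<And>n. word_ball H SH n \<times> word_ball K SK n \<subseteq> word_ball (H \<times>\<times> K) SG (c * n)"
    using word_ball_DirProd_supset by blast
  let ?p = "map_prod (aut_orbit H) (aut_orbit K)"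
  have "aut_growth H SH n * aut_growth K SK n \<le> aut_growth (H \<times>\<times> K) SG (c * n)" for n
  proof -
    let ?BH = "word_ball H SH n" and ?BK = "word_ball K SK n"
    have fin: "finite (?BH \<times> ?BK)"
      using group.finite_word_ball[OF H SH] group.finite_word_ball[OF K SK] by blast
    have "aut_growth H SH n * aut_growth K SK n = card (aut_orbit H ` ?BH \<times> aut_orbit K ` ?BK)"
      by (simp add: aut_growth_eq_card_word_ball card_cartesian_product)
    also have "\<dots> = card (?p ` (?BH \<times> ?BK))"
      by (simp add: map_prod_surj_on)
    also have "\<dots> \<le> card (aut_orbit (H \<times>\<times> K) ` (?BH \<times> ?BK))"
    proof (rule card_image_le_card_image[OF fin])
      fix x y assume "x \<in> ?BH \<times> ?BK" "aut_orbit (H \<times>\<times> K) x = aut_orbit (H \<times>\<times> K) y"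
      then show "?p x = ?p y"
        using aut_orbit_DirProd_eqD[OF H K charH charK] unfolding word_ball_def
        by (cases x, cases y) auto
    qed
    also have "\<dots> \<le> card (aut_orbit (H \<times>\<times> K) ` word_ball (H \<times>\<times> K) SG (c * n))"
      using c G.finite_word_ball[OF SG] by (intro card_mono finite_imageI image_mono) auto
    also have "\<dots> = aut_growth (H \<times>\<times> K) SG (c * n)"
      by (rule aut_growth_eq_card_word_ball[symmetric])
    finally show ?thesis .
  qed
  then show ?thesis by (rule growth_le_dilationI[OF G.mono_aut_growth[OF SG]])
qed

end

theorem mainTheorem15:
  fixes H :: "('a, 'c) monoid_scheme" and K :: "('b, 'd) monoid_scheme"
    and SH :: "'a set" and SK :: "'b set" and SG :: "('a \<times> 'b) set"
  assumes "group H" and "group K"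
    and "fin_gen_set H SH" and "fin_gen_set K SK"
    and "fin_gen_set (DirProd H K) SG"
  shows "aut_growth (DirProd H K) SG \<preccurlyeq>\<^sub>g (\<lambda>n. aut_growth H SH n * aut_growth K SK n)
    \<and> (characteristic {(h, \<one>\<^bsub>K\<^esub>) | h. h \<in> carrier H} (DirProd H K) \<and>
         characteristic {(\<one>\<^bsub>H\<^esub>, k) | k. k \<in> carrier K} (DirProd H K) \<longrightarrow>
         aut_growth (DirProd H K) SG \<sim>\<^sub>g (\<lambda>n. aut_growth H SH n * aut_growth K SK n))"
proof -
  have "{(h, \<one>\<^bsub>K\<^esub>) | h. h \<in> carrier H} = carrier H \<times> {\<one>\<^bsub>K\<^esub>}"
    and "{(\<one>\<^bsub>H\<^esub>, k) | k. k \<in> carrier K} = {\<one>\<^bsub>H\<^esub>} \<times> carrier K"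
    by auto
  then show ?thesis
    using aut_growth_DirProd_le[OF assms] aut_growth_DirProd_ge[OF assms]
    unfolding growth_equiv_def by auto
qed

end
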